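(* Let $\varphi$ be a skew-morphism of a finite group $A$ with power function $\pi:A\to\mathbb{Z}_m$, where $m$ is the order of $\varphi$, let $n$ be a positive multiple of $m$, and let $\Pi:A\to\mathbb{Z}_n$ be an extended power function of $\varphi$. Let $\mathrm{Av}:A\to\mathbb{Z}_{n/m}$ and $\Lambda:A\to\mathbb{Z}_{n/m}$ be the average and mate functions of $\Pi$. Then: (a) $\mathrm{Av}(x)\equiv\mathrm{Av}(\varphi(x))\pmod{n/m}$ for all $x\in A$; (b) $\mathrm{Av}$ is a group homomorphism from $A$ into the multiplicative group $\mathbb{Z}_{n/m}^*$; (c) if $\varphi$ is an automorphism of $A$, then $\Lambda(xy)\equiv\Lambda(y)+\Lambda(x)\mathrm{Av}(y)\pmod{n/m}$ for all $x,y\in A$; in particular, if $\mathrm{Av}(x)\equiv1\pmod{n/m}$ for all $x\in A$, then $\Lambda(xy)\equiv\Lambda(x)+\Lambda(y)\pmod{n/m}$ for all $x,y\in A$.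
   Context: A skew-morphism of a finite group $A$ is a permutation $\varphi$ of $A$ with $\varphi(1_A)=1_A$ for which there is a function $\pi:A\to\mathbb{Z}_m$ ($m$ the order of $\varphi$) with $\varphi(xy)=\varphi(x)\varphi^{\pi(x)}(y)$ for all $x,y\in A$; when $\varphi$ is an automorphism, $\pi(x)\equiv1\pmod m$ for all $x$. For a positive multiple $n$ of $m$, $\Pi:A\to\mathbb{Z}_n$ is an extended power function of $\varphi$ if (i) $\Pi(x)\equiv\pi(x)\pmod m$; (ii) $\Pi(1_A)\equiv1\pmod n$; (iii) $\Pi(xy)\equiv\sum_{i=1}^{\Pi(x)}\Pi(\varphi^{i-1}(y))\pmod n$ for all $x,y\in A$. Let $\sigma_\Pi(x,k)=\sum_{i=1}^{k}\Pi(\varphi^{i-1}(x))\in\mathbb{Z}_n$. Since $\sigma_\Pi(x,m)\equiv0\pmod m$, the average function is $\mathrm{Av}(x)=\frac1m\sigma_\Pi(x,m)\in\mathbb{Z}_{n/m}$, and the mate function is $\Lambda(x)=\frac1m(\Pi(x)-\pi(x))\in\mathbb{Z}_{n/m}$, where $\pi(x)$ is represented by an integer congruent to it modulo $m$ (in the automorphism case, by $1$). *)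

theory Defs
  imports "HOL-Algebra.Group" "HOL-Number_Theory.Cong"
begin

definition perm_ord :: "('a \<Rightarrow> 'a) \<Rightarrow> 'a set \<Rightarrow> nat" where
  "perm_ord \<phi> A = (LEAST k. 0 < k \<and> (\<forall>x\<in>A. (\<phi> ^^ k) x = x))"

definition skew_morphism :: "('a, 'b) monoid_scheme \<Rightarrow> ('a \<Rightarrow> 'a) \<Rightarrow> ('a \<Rightarrow> nat) \<Rightarrow> bool" where
  "skew_morphism G \<phi> \<pi> \<longleftrightarrow>
     bij_betw \<phi> (carrier G) (carrier G) \<and> \<phi> \<one>\<^bsub>G\<^esub> = \<one>\<^bsub>G\<^esub> \<and>
     (\<forall>x\<in>carrier G. \<pi> x < perm_ord \<phi> (carrier G)) \<and>
     (\<forall>x\<in>carrier G. \<forall>y\<in>carrier G. \<phi> (x \<otimes>\<^bsub>G\<^esub> y) = \<phi> x \<otimes>\<^bsub>G\<^esub> (\<phi> ^^ \<pi> x) y)"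

definition ext_power_fun ::
  "('a, 'b) monoid_scheme \<Rightarrow> ('a \<Rightarrow> 'a) \<Rightarrow> ('a \<Rightarrow> nat) \<Rightarrow> nat \<Rightarrow> ('a \<Rightarrow> nat) \<Rightarrow> bool" where
  "ext_power_fun G \<phi> \<pi> n Pw \<longleftrightarrow>
     0 < n \<and> perm_ord \<phi> (carrier G) dvd n \<and>
     (\<forall>x\<in>carrier G. Pw x < n) \<and>
     (\<forall>x\<in>carrier G. [Pw x = \<pi> x] (mod perm_ord \<phi> (carrier G))) \<and>
     [Pw \<one>\<^bsub>G\<^esub> = 1] (mod n) \<and>
     (\<forall>x\<in>carrier G. \<forall>y\<in>carrier G.
        [Pw (x \<otimes>\<^bsub>G\<^esub> y) = (\<Sum>i=1..Pw x. Pw ((\<phi> ^^ (i - 1)) y))] (mod n))"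

definition sigma_Pi :: "('a \<Rightarrow> 'a) \<Rightarrow> ('a \<Rightarrow> nat) \<Rightarrow> 'a \<Rightarrow> nat \<Rightarrow> int" where
  "sigma_Pi \<phi> Pw x k = (\<Sum>i=1..k. int (Pw ((\<phi> ^^ (i - 1)) x)))"

text \<open>Average function Av(x) = sigma_Pi(x,m)/m in Z_{n/m}, with sigma_Pi(x,m) taken as its
  representative in {0..<n}; the result lies in {0..<n/m}.\<close>
definition avg_fun :: "('a, 'b) monoid_scheme \<Rightarrow> ('a \<Rightarrow> 'a) \<Rightarrow> nat \<Rightarrow> ('a \<Rightarrow> nat) \<Rightarrow> 'a \<Rightarrow> int" where
  "avg_fun G \<phi> n Pw x =
     (sigma_Pi \<phi> Pw x (perm_ord \<phi> (carrier G)) mod int n) div int (perm_ord \<phi> (carrier G))"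

text \<open>Mate function Lambda(x) = (Pi(x) - r(x))/m in Z_{n/m}, where r(x) is the chosen integer
  representative of pi(x) (in the automorphism case r(x) = 1).\<close>
definition mate_fun ::
  "('a, 'b) monoid_scheme \<Rightarrow> ('a \<Rightarrow> 'a) \<Rightarrow> nat \<Rightarrow> ('a \<Rightarrow> nat) \<Rightarrow> ('a \<Rightarrow> int) \<Rightarrow> 'a \<Rightarrow> int" where
  "mate_fun G \<phi> n Pw r x =
     ((int (Pw x) - r x) div int (perm_ord \<phi> (carrier G))) mod int (n div perm_ord \<phi> (carrier G))"

end

theory Submission
  imports Defs "HOL-Combinatorics.Cycles"
begin

text \<open>Write \<open>\<sigma>(x,k) = \<Sigma>j<k. \<Pi>(\<phi>\<^sup>j x)\<close>. Iterating the skew-morphism rule gives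
  \<open>\<phi>\<^sup>i(xy) = \<phi>\<^sup>i(x) \<phi>\<^bsup>\<sigma>(x,i)\<^esup>(y)\<close>; for \<open>i = m\<close>, cancelling \<open>x\<close> shows that
  \<open>\<phi>\<^bsup>\<sigma>(x,m)\<^esup>\<close> is the identity, so \<open>m\<close> divides \<open>\<sigma>(x,m)\<close> and the average is an exact
  quotient. Over full periods \<open>\<sigma>(y,-)\<close> is additive, \<open>\<sigma>(y, a + q m) = \<sigma>(y,a) + q \<sigma>(y,m)\<close>.
  The rule \<open>\<Pi>(xy) = \<sigma>(y,\<Pi>(x))\<close> (mod \<open>n\<close>) propagates along orbits to
  \<open>\<sigma>(xy,k) = \<sigma>(y,\<sigma>(x,k))\<close>; at \<open>k = m\<close> this reads \<open>\<sigma>(xy,m) = Av(x) \<sigma>(y,m)\<close>, which is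
  multiplicativity of \<open>Av\<close> after division by \<open>m\<close>, and \<open>Av(1) = 1\<close> makes its values units.
  For an automorphism \<open>\<pi> = 1\<close> mod \<open>m\<close>, so \<open>\<Pi>(x) = 1 + m \<Lambda>(x)\<close>, and periodicity gives
  \<open>\<Pi>(xy) = \<Pi>(y) + \<Lambda>(x) \<sigma>(y,m)\<close>, the mate identity multiplied by \<open>m\<close>.\<close>

lemma cong_mult_cancel_modulus:
  fixes a b c n :: "'a :: {unique_euclidean_semiring, euclidean_semiring_cancel}"
  assumes "c \<noteq> 0" "c dvd n"
  shows "[c * a = c * b] (mod n) \<longleftrightarrow> [a = b] (mod n div c)"
  using assms by (auto simp: cong_def mod_mult_mult1 elim!: dvdE)

lemma funpow_cong_period:
  assumes "(f ^^ p) x = x" and "[a = b] (mod p)"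
  shows "(f ^^ a) x = (f ^^ b) x"
  by (metis assms cong_def funpow_mod_eq)

lemma funpow_period_exists:
  assumes "finite A" and "bij_betw \<phi> A A"
  shows "\<exists>k>0. \<forall>x\<in>A. (\<phi> ^^ k) x = x"
proof -
  define \<psi> where "\<psi> x = (if x \<in> A then \<phi> x else x)" for x
  have "bij_betw \<psi> A A"
    using assms(2) by (rule bij_betw_cong[THEN iffD1, rotated]) (simp add: \<psi>_def)
  then have "\<psi> permutes A"
    by (rule bij_imp_permutes) (simp add: \<psi>_def)
  then obtain k where k: "\<psi> ^^ k = id" "k > 0"
    using assms(1) permutation_is_nilpotent permutes_imp_permutation by blast
  have "x \<in> A \<Longrightarrow> (\<psi> ^^ j) x = (\<phi> ^^ j) x \<and> (\<phi> ^^ j) x \<in> A" for x j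
    using bij_betwE[OF assms(2)] by (induction j) (auto simp: \<psi>_def)
  then have "\<forall>x\<in>A. (\<phi> ^^ k) x = x"
    using k(1) by (metis id_apply)
  with k(2) show ?thesis
    by blast
qed

context
  fixes A :: "'a set" and \<phi> :: "'a \<Rightarrow> 'a"
  assumes finite: "finite A" and bij: "bij_betw \<phi> A A"
begin

lemma perm_ord_pos: "0 < perm_ord \<phi> A"
  and funpow_perm_ord: "x \<in> A \<Longrightarrow> (\<phi> ^^ perm_ord \<phi> A) x = x"
proof -
  have "0 < perm_ord \<phi> A \<and> (\<forall>x\<in>A. (\<phi> ^^ perm_ord \<phi> A) x = x)"
    unfolding perm_ord_def using funpow_period_exists[OF finite bij] by (rule LeastI_ex)
  then show "0 < perm_ord \<phi> A" "x \<in> A \<Longrightarrow> (\<phi> ^^ perm_ord \<phi> A) x = x"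
    by auto
qed

lemma perm_ord_dvd:
  assumes "\<forall>x\<in>A. (\<phi> ^^ k) x = x"
  shows "perm_ord \<phi> A dvd k"
proof -
  have "\<forall>x\<in>A. (\<phi> ^^ (k mod perm_ord \<phi> A)) x = x"
    using funpow_mod_eq[OF funpow_perm_ord] assms by simp
  moreover have "k mod perm_ord \<phi> A < perm_ord \<phi> A"
    using perm_ord_pos by simp
  ultimately have "\<not> 0 < k mod perm_ord \<phi> A"
    using Least_le[of "\<lambda>k. 0 < k \<and> (\<forall>x\<in>A. (\<phi> ^^ k) x = x)" "k mod perm_ord \<phi> A"]
    unfolding perm_ord_def by linarith
  then show ?thesis
    by (simp add: mod_greater_zero_iff_not_dvd)
qed

lemma perm_ord_cong_if_funpow_eq:
  assumes "\<forall>x\<in>A. (\<phi> ^^ a) x = (\<phi> ^^ b) x"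
  shows "[a = b] (mod perm_ord \<phi> A)"
proof -
  define m where "m = perm_ord \<phi> A"
  \<comment> \<open>\<open>c\<close> tops \<open>b\<close> up to a multiple of \<open>m\<close>, so \<open>\<phi>\<^bsup>c\<^esup>\<close> inverts \<open>\<phi>\<^bsup>b\<^esup>\<close> and hence \<open>\<phi>\<^bsup>a\<^esup>\<close>.\<close>
  define c where "c = m - b mod m"
  have "b + c = m * (b div m) + m"
    using mult_div_mod_eq[of m b] mod_less_divisor[OF perm_ord_pos, of b]
    unfolding c_def m_def by linarith
  then have "m dvd b + c"
    by simp
  then have id_bc: "(\<phi> ^^ (b + c)) x = x" if "x \<in> A" for x
    using funpow_cong_period[OF funpow_perm_ord[OF that], of "b + c" 0]
    by (simp add: m_def cong_0_iff)
  have "(\<phi> ^^ (c + a)) x = x" if "x \<in> A" for x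
  proof -
    have "(\<phi> ^^ (c + a)) x = (\<phi> ^^ c) ((\<phi> ^^ b) x)"
      using assms that by (simp add: funpow_add)
    also have "\<dots> = (\<phi> ^^ (c + b)) x"
      by (simp add: funpow_add)
    also have "\<dots> = x"
      using id_bc[OF that] by (simp add: add.commute)
    finally show ?thesis .
  qed
  then have "m dvd c + a"
    unfolding m_def by (intro perm_ord_dvd) blast
  with \<open>m dvd b + c\<close> have "[a + c = b + c] (mod m)"
    by (simp add: cong_def dvd_eq_mod_eq_0 add.commute)
  then show ?thesis
    unfolding m_def by (rule cong_add_rcancel_nat[THEN iffD1])
qed

end

definition orbit_sum :: "('a \<Rightarrow> 'a) \<Rightarrow> ('a \<Rightarrow> nat) \<Rightarrow> 'a \<Rightarrow> nat \<Rightarrow> nat" where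
  "orbit_sum \<phi> w x k = (\<Sum>j<k. w ((\<phi> ^^ j) x))"

lemma orbit_sum_0 [simp]: "orbit_sum \<phi> w x 0 = 0"
  by (simp add: orbit_sum_def)

lemma orbit_sum_Suc: "orbit_sum \<phi> w x (Suc k) = orbit_sum \<phi> w x k + w ((\<phi> ^^ k) x)"
  by (simp add: orbit_sum_def)

lemma sum_atLeast1_eq_orbit_sum: "(\<Sum>i=1..k. w ((\<phi> ^^ (i - 1)) x)) = orbit_sum \<phi> w x k"
  by (simp add: orbit_sum_def sum.atLeast1_atMost_eq)

lemma sigma_Pi_eq_orbit_sum: "sigma_Pi \<phi> w x k = int (orbit_sum \<phi> w x k)"
  unfolding sigma_Pi_def sum_atLeast1_eq_orbit_sum[symmetric] by simp

lemma orbit_sum_add: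
  "orbit_sum \<phi> w x (a + b) = orbit_sum \<phi> w x a + orbit_sum \<phi> w ((\<phi> ^^ a) x) b"
proof (induction b)
  case (Suc b)
  have "(\<phi> ^^ (a + b)) x = (\<phi> ^^ b) ((\<phi> ^^ a) x)"
    by (simp only: add.commute[of a b] funpow_add comp_apply)
  with Suc show ?case
    by (simp add: orbit_sum_Suc)
qed simp

lemma orbit_sum_funpow_period:
  assumes "(\<phi> ^^ p) x = x"
  shows "orbit_sum \<phi> w ((\<phi> ^^ a) x) p = orbit_sum \<phi> w x p"
  using orbit_sum_add[of \<phi> w x a p] orbit_sum_add[of \<phi> w x p a] assms by (simp add: add.commute)

lemma orbit_sum_add_mult_period:
  assumes "(\<phi> ^^ p) x = x"
  shows "orbit_sum \<phi> w x (a + q * p) = orbit_sum \<phi> w x a + q * orbit_sum \<phi> w x p"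
proof (induction q)
  case (Suc q)
  have "orbit_sum \<phi> w x (a + Suc q * p) = orbit_sum \<phi> w x ((a + q * p) + p)"
    by (simp add: algebra_simps)
  also have "\<dots> = orbit_sum \<phi> w x (a + q * p) + orbit_sum \<phi> w x p"
    using orbit_sum_add orbit_sum_funpow_period[OF assms] by metis
  finally show ?case
    using Suc by simp
qed simp

locale ext_skew_morphism = group G for G :: "('a, 'b) monoid_scheme" (structure) +
  fixes \<phi> :: "'a \<Rightarrow> 'a" and \<pi> Pw :: "'a \<Rightarrow> nat" and n :: nat
  assumes finite_carrier: "finite (carrier G)"
    and is_skew_morphism: "skew_morphism G \<phi> \<pi>"
    and is_ext_power_fun: "ext_power_fun G \<phi> \<pi> n Pw"
begin

abbreviation m where "m \<equiv> perm_ord \<phi> (carrier G)"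

abbreviation \<sigma> where "\<sigma> \<equiv> orbit_sum \<phi> Pw"

lemma bij_phi: "bij_betw \<phi> (carrier G) (carrier G)"
  and phi_one: "\<phi> \<one> = \<one>"
  and phi_mult: "x \<in> carrier G \<Longrightarrow> y \<in> carrier G \<Longrightarrow> \<phi> (x \<otimes> y) = \<phi> x \<otimes> (\<phi> ^^ \<pi> x) y"
  using is_skew_morphism unfolding skew_morphism_def by blast+

lemma phi_closed [simp]: "x \<in> carrier G \<Longrightarrow> \<phi> x \<in> carrier G"
  using bij_betwE[OF bij_phi] by blast

lemma funpow_closed [simp]: "x \<in> carrier G \<Longrightarrow> (\<phi> ^^ k) x \<in> carrier G"
  by (induction k) auto

lemma m_pos: "0 < m"
  by (rule perm_ord_pos[OF finite_carrier bij_phi])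

lemma funpow_m: "x \<in> carrier G \<Longrightarrow> (\<phi> ^^ m) x = x"
  by (rule funpow_perm_ord[OF finite_carrier bij_phi])

lemma n_div_m_pos: "0 < n div m"
  and m_dvd_n: "m dvd n"
  and Pw_cong_pi: "x \<in> carrier G \<Longrightarrow> [Pw x = \<pi> x] (mod m)"
  and Pw_one_cong: "[Pw \<one> = 1] (mod n)"
  using is_ext_power_fun unfolding ext_power_fun_def
  by (auto simp: div_greater_zero_iff m_pos dvd_imp_le)

lemma n_eq: "m * (n div m) = n"
  using m_dvd_n by simp

lemma Pw_mult_cong:
  "x \<in> carrier G \<Longrightarrow> y \<in> carrier G \<Longrightarrow> [Pw (x \<otimes> y) = \<sigma> y (Pw x)] (mod n)"
  using is_ext_power_fun unfolding ext_power_fun_def sum_atLeast1_eq_orbit_sum by blast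

lemma funpow_skew_mult:
  assumes "x \<in> carrier G" "y \<in> carrier G"
  shows "(\<phi> ^^ i) (x \<otimes> y) = (\<phi> ^^ i) x \<otimes> (\<phi> ^^ \<sigma> x i) y"
proof (induction i)
  case (Suc i)
  have "[\<pi> ((\<phi> ^^ i) x) + \<sigma> x i = Pw ((\<phi> ^^ i) x) + \<sigma> x i] (mod m)"
    using Pw_cong_pi[of "(\<phi> ^^ i) x"] assms by (simp add: cong_add_rcancel_nat cong_sym_eq)
  then have "[\<pi> ((\<phi> ^^ i) x) + \<sigma> x i = \<sigma> x (Suc i)] (mod m)"
    by (simp add: orbit_sum_Suc add.commute)
  then have "(\<phi> ^^ (\<pi> ((\<phi> ^^ i) x) + \<sigma> x i)) y = (\<phi> ^^ \<sigma> x (Suc i)) y"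
    by (rule funpow_cong_period[OF funpow_m[OF assms(2)]])
  then have "(\<phi> ^^ \<pi> ((\<phi> ^^ i) x)) ((\<phi> ^^ \<sigma> x i) y) = (\<phi> ^^ \<sigma> x (Suc i)) y"
    by (simp add: funpow_add)
  then show ?case
    using Suc assms by (simp add: phi_mult)
qed (simp add: orbit_sum_def)

lemma m_dvd_orbit_sum:
  assumes "x \<in> carrier G"
  shows "m dvd \<sigma> x m"
proof (intro perm_ord_dvd[OF finite_carrier bij_phi] ballI)
  fix y assume "y \<in> carrier G"
  then have "x \<otimes> y = x \<otimes> (\<phi> ^^ \<sigma> x m) y"
    using funpow_skew_mult[OF assms, of y m] funpow_m assms by simp
  then show "(\<phi> ^^ \<sigma> x m) y = y"
    using assms \<open>y \<in> carrier G\<close> by simp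
qed

lemma orbit_sum_mult_cong:
  assumes "x \<in> carrier G" "y \<in> carrier G"
  shows "[\<sigma> (x \<otimes> y) k = \<sigma> y (\<sigma> x k)] (mod n)"
proof (induction k)
  case (Suc k)
  have "[Pw ((\<phi> ^^ k) (x \<otimes> y)) = \<sigma> ((\<phi> ^^ \<sigma> x k) y) (Pw ((\<phi> ^^ k) x))] (mod n)"
    using Pw_mult_cong assms by (simp add: funpow_skew_mult)
  with Suc have "[\<sigma> (x \<otimes> y) (Suc k) = \<sigma> y (\<sigma> x k) + \<sigma> ((\<phi> ^^ \<sigma> x k) y) (Pw ((\<phi> ^^ k) x))] (mod n)"
    unfolding orbit_sum_Suc by (rule cong_add)
  then show ?case
    by (simp add: orbit_sum_Suc orbit_sum_add[symmetric])
qed simp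

definition avg :: "'a \<Rightarrow> nat" where
  "avg x = \<sigma> x m div m"

lemma orbit_sum_m_eq_avg: "x \<in> carrier G \<Longrightarrow> \<sigma> x m = m * avg x"
  unfolding avg_def using m_dvd_orbit_sum by simp

lemma avg_phi: "x \<in> carrier G \<Longrightarrow> avg (\<phi> x) = avg x"
  unfolding avg_def using orbit_sum_funpow_period[OF funpow_m, of x Pw 1] by simp

lemma avg_mult_cong:
  assumes "x \<in> carrier G" "y \<in> carrier G"
  shows "[avg (x \<otimes> y) = avg x * avg y] (mod n div m)"
proof -
  have "[\<sigma> (x \<otimes> y) m = \<sigma> y (\<sigma> x m)] (mod n)"
    by (rule orbit_sum_mult_cong[OF assms])
  also have "\<sigma> y (\<sigma> x m) = avg x * \<sigma> y m"
    using orbit_sum_add_mult_period[OF funpow_m[OF assms(2)], of Pw 0 "avg x"]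
    by (simp add: orbit_sum_m_eq_avg[OF assms(1)] mult.commute)
  finally have "[m * avg (x \<otimes> y) = m * (avg x * avg y)] (mod n)"
    using assms by (simp add: orbit_sum_m_eq_avg ac_simps)
  then show ?thesis
    using cong_mult_cancel_modulus[of m n] m_pos m_dvd_n by simp
qed

lemma avg_one_cong: "[avg \<one> = 1] (mod n div m)"
proof -
  have "(\<phi> ^^ j) \<one> = \<one>" for j
    by (induction j) (simp_all add: phi_one)
  then have "avg \<one> = Pw \<one>"
    using m_pos by (simp add: avg_def orbit_sum_def)
  moreover have "n div m dvd n"
    by (metis n_eq dvd_triv_right)
  ultimately show ?thesis
    using cong_dvd_modulus_nat[OF Pw_one_cong] by simp
qed

lemma coprime_avg:
  assumes "x \<in> carrier G"
  shows "coprime (avg x) (n div m)"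
proof -
  have "[avg x * avg (inv x) = avg \<one>] (mod n div m)"
    using avg_mult_cong[OF assms inv_closed[OF assms]] assms by (simp add: cong_sym)
  then have "[avg x * avg (inv x) = 1] (mod n div m)"
    using avg_one_cong by (rule cong_trans)
  then show ?thesis
    by (metis cong_imp_coprime cong_sym coprime_1_left coprime_mult_left_iff)
qed

lemma avg_fun_eq:
  assumes "x \<in> carrier G"
  shows "avg_fun G \<phi> n Pw x = int (avg x mod (n div m))"
proof -
  have "\<sigma> x m mod n = m * (avg x mod (n div m))"
    using orbit_sum_m_eq_avg[OF assms] mod_mult_mult1[of m "avg x" "n div m"] by (simp add: n_eq)
  then show ?thesis
    unfolding avg_fun_def sigma_Pi_eq_orbit_sum using m_pos by (simp flip: of_nat_mod)
qed

lemma pi_cong_one_if_hom: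
  assumes "\<phi> \<in> hom G G" "x \<in> carrier G"
  shows "[\<pi> x = 1] (mod m)"
proof (intro perm_ord_cong_if_funpow_eq[OF finite_carrier bij_phi] ballI)
  fix y assume "y \<in> carrier G"
  then have "\<phi> x \<otimes> (\<phi> ^^ \<pi> x) y = \<phi> x \<otimes> \<phi> y"
    using phi_mult[OF assms(2)] hom_mult[OF assms] by simp
  then show "(\<phi> ^^ \<pi> x) y = (\<phi> ^^ 1) y"
    using assms \<open>y \<in> carrier G\<close> by simp
qed

definition mate :: "'a \<Rightarrow> int" where
  "mate x = (int (Pw x) - 1) div int m"

lemma Pw_eq_mate:
  assumes "\<phi> \<in> hom G G" "x \<in> carrier G"
  shows "int (Pw x) = 1 + int m * mate x"
proof -
  have "[Pw x = 1] (mod m)"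
    using Pw_cong_pi[OF assms(2)] pi_cong_one_if_hom[OF assms] by (rule cong_trans)
  then have "int m dvd int (Pw x) - 1"
    by (metis cong_iff_dvd_diff cong_int_iff of_nat_1)
  then show ?thesis
    unfolding mate_def by simp
qed

lemma orbit_sum_Pw_eq_mate:
  assumes "\<phi> \<in> hom G G" "x \<in> carrier G" "y \<in> carrier G"
  shows "int (\<sigma> y (Pw x)) = int (Pw y) + mate x * int (\<sigma> y m)"
proof -
  have "0 \<le> int m * (mate x + 1)"
    using Pw_eq_mate[OF assms(1,2)] m_pos by (simp add: distrib_left)
  then have "0 \<le> mate x + 1"
    using m_pos by (simp add: zero_le_mult_iff)
  \<comment> \<open>\<open>\<Lambda>(x) = -1\<close> is possible (when \<open>m = 1\<close> and \<open>\<Pi>(x) = 0\<close>), so shift the exponent by one period.\<close>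
  then obtain k where k: "int k = mate x + 1"
    using nonneg_int_cases by metis
  have "int (Pw x + m) = int (1 + k * m)"
    using k Pw_eq_mate[OF assms(1,2)] by (simp add: algebra_simps)
  then have Pw_plus_m: "Pw x + m = 1 + k * m"
    by (simp only: of_nat_eq_iff)
  have "\<sigma> y (Pw x) + \<sigma> y m = \<sigma> y (Pw x + m)"
    using orbit_sum_add_mult_period[OF funpow_m[OF assms(3)], of Pw "Pw x" 1] by simp
  also have "\<dots> = Pw y + k * \<sigma> y m"
    using orbit_sum_add_mult_period[OF funpow_m[OF assms(3)], of Pw 1 k] by (simp add: Pw_plus_m orbit_sum_Suc)
  finally have "int (\<sigma> y (Pw x)) + int (\<sigma> y m) = int (Pw y) + int k * int (\<sigma> y m)"
    by (simp only: of_nat_add[symmetric] of_nat_mult[symmetric] of_nat_eq_iff)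
  then have "int (\<sigma> y (Pw x)) = int (Pw y) + (int k - 1) * int (\<sigma> y m)"
    by (simp add: algebra_simps)
  with k show ?thesis
    by simp
qed

lemma mate_mult_cong:
  assumes "\<phi> \<in> hom G G" "x \<in> carrier G" "y \<in> carrier G"
  shows "[mate (x \<otimes> y) = mate y + mate x * int (avg y)] (mod int (n div m))"
proof -
  have Pw_xy: "int (Pw (x \<otimes> y)) = 1 + int m * mate (x \<otimes> y)"
    using assms by (simp add: Pw_eq_mate)
  have orbit_sum_y: "int (\<sigma> y (Pw x)) = 1 + int m * (mate y + mate x * int (avg y))"
    using orbit_sum_Pw_eq_mate[OF assms] Pw_eq_mate[OF assms(1,3)] orbit_sum_m_eq_avg[OF assms(3)]
    by (simp add: algebra_simps)
  have "[int (Pw (x \<otimes> y)) = int (\<sigma> y (Pw x))] (mod int n)"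
    using Pw_mult_cong[OF assms(2,3)] by (simp only: cong_int_iff)
  then have "[int m * mate (x \<otimes> y) = int m * (mate y + mate x * int (avg y))] (mod int n)"
    by (simp only: Pw_xy orbit_sum_y cong_add_lcancel)
  then show ?thesis
    using cong_mult_cancel_modulus[of "int m" "int n"] m_pos m_dvd_n by (simp add: zdiv_int)
qed

lemma mate_fun_eq: "mate_fun G \<phi> n Pw (\<lambda>_. 1) x = mate x mod int (n div m)"
  unfolding mate_fun_def mate_def by simp

lemma avg_fun_phi: "x \<in> carrier G \<Longrightarrow> avg_fun G \<phi> n Pw (\<phi> x) = avg_fun G \<phi> n Pw x"
  by (simp add: avg_fun_eq avg_phi)

lemma coprime_avg_fun: "x \<in> carrier G \<Longrightarrow> coprime (avg_fun G \<phi> n Pw x) (int (n div m))"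
  using n_div_m_pos by (simp add: avg_fun_eq coprime_avg)

lemma avg_fun_mult_cong:
  assumes "x \<in> carrier G" "y \<in> carrier G"
  shows "[avg_fun G \<phi> n Pw (x \<otimes> y) = avg_fun G \<phi> n Pw x * avg_fun G \<phi> n Pw y] (mod int (n div m))"
proof -
  have "[avg (x \<otimes> y) mod (n div m) = (avg x mod (n div m)) * (avg y mod (n div m))] (mod n div m)"
    using avg_mult_cong[OF assms] by (simp add: cong_def mod_mult_eq)
  then have "[int (avg (x \<otimes> y) mod (n div m)) = int ((avg x mod (n div m)) * (avg y mod (n div m)))]
      (mod int (n div m))"
    by (simp only: cong_int_iff)
  then show ?thesis
    using assms by (simp add: avg_fun_eq)
qed

lemma mate_fun_mult_cong:
  assumes "\<phi> \<in> hom G G" "x \<in> carrier G" "y \<in> carrier G"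
  shows "[mate_fun G \<phi> n Pw (\<lambda>_. 1) (x \<otimes> y)
    = mate_fun G \<phi> n Pw (\<lambda>_. 1) y + mate_fun G \<phi> n Pw (\<lambda>_. 1) x * avg_fun G \<phi> n Pw y] (mod int (n div m))"
proof -
  have "[mate_fun G \<phi> n Pw (\<lambda>_. 1) (x \<otimes> y) = mate (x \<otimes> y)] (mod int (n div m))"
    by (simp add: mate_fun_eq)
  also have "[mate (x \<otimes> y) = mate y + mate x * int (avg y)] (mod int (n div m))"
    by (rule mate_mult_cong[OF assms])
  also have "[mate y + mate x * int (avg y)
      = mate_fun G \<phi> n Pw (\<lambda>_. 1) y + mate_fun G \<phi> n Pw (\<lambda>_. 1) x * avg_fun G \<phi> n Pw y]
      (mod int (n div m))"
    using assms(3) by (intro cong_add cong_mult) (simp_all add: mate_fun_eq avg_fun_eq of_nat_mod cong_def)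
  finally show ?thesis .
qed

end

theorem proposition3p3:
  fixes G :: "('a, 'b) monoid_scheme" and \<phi> :: "'a \<Rightarrow> 'a" and \<pi> Pw :: "'a \<Rightarrow> nat" and n :: nat
  assumes "group G" and "finite (carrier G)"
    and "skew_morphism G \<phi> \<pi>"
    and "ext_power_fun G \<phi> \<pi> n Pw"
  defines "m \<equiv> perm_ord \<phi> (carrier G)"
  defines "Av \<equiv> avg_fun G \<phi> n Pw"
  defines "Lam \<equiv> mate_fun G \<phi> n Pw (\<lambda>_. 1)"
  shows "(\<forall>x\<in>carrier G. [Av x = Av (\<phi> x)] (mod int (n div m)))
    \<and> (\<forall>x\<in>carrier G. coprime (Av x) (int (n div m)))
    \<and> (\<forall>x\<in>carrier G. \<forall>y\<in>carrier G. [Av (x \<otimes>\<^bsub>G\<^esub> y) = Av x * Av y] (mod int (n div m)))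
    \<and> (\<phi> \<in> hom G G \<longrightarrow>
         (\<forall>x\<in>carrier G. \<forall>y\<in>carrier G.
            [Lam (x \<otimes>\<^bsub>G\<^esub> y) = Lam y + Lam x * Av y] (mod int (n div m)))
       \<and> ((\<forall>x\<in>carrier G. [Av x = 1] (mod int (n div m))) \<longrightarrow>
            (\<forall>x\<in>carrier G. \<forall>y\<in>carrier G.
               [Lam (x \<otimes>\<^bsub>G\<^esub> y) = Lam x + Lam y] (mod int (n div m)))))"
proof -
  interpret ext_skew_morphism G \<phi> \<pi> Pw n
    by (intro ext_skew_morphism.intro ext_skew_morphism_axioms.intro assms(1-4))
  have avg_phi: "[Av x = Av (\<phi> x)] (mod int (n div m))"
    and avg_coprime: "coprime (Av x) (int (n div m))" if "x \<in> carrier G" for x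
    unfolding Av_def m_def using that by (simp_all add: avg_fun_phi coprime_avg_fun)
  have avg_mult: "[Av (x \<otimes>\<^bsub>G\<^esub> y) = Av x * Av y] (mod int (n div m))"
    if "x \<in> carrier G" "y \<in> carrier G" for x y
    unfolding Av_def m_def using avg_fun_mult_cong[OF that] .
  have mate_mult: "[Lam (x \<otimes>\<^bsub>G\<^esub> y) = Lam y + Lam x * Av y] (mod int (n div m))"
    if "\<phi> \<in> hom G G" "x \<in> carrier G" "y \<in> carrier G" for x y
    unfolding Lam_def Av_def m_def using mate_fun_mult_cong[OF that] .
  have mate_mult_avg_one: "[Lam (x \<otimes>\<^bsub>G\<^esub> y) = Lam x + Lam y] (mod int (n div m))"
    if "\<phi> \<in> hom G G" "x \<in> carrier G" "y \<in> carrier G" "[Av y = 1] (mod int (n div m))" for x y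
  proof -
    have "[Lam y + Lam x * Av y = Lam y + Lam x * 1] (mod int (n div m))"
      using that(4) by (intro cong_add cong_mult cong_refl)
    then have "[Lam y + Lam x * Av y = Lam x + Lam y] (mod int (n div m))"
      by (simp only: mult_1_right add.commute)
    with mate_mult[OF that(1-3)] show ?thesis
      by (rule cong_trans)
  qed
  show ?thesis
    by (intro conjI impI ballI avg_phi avg_coprime avg_mult mate_mult mate_mult_avg_one) auto
qed

end
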